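(* Let $X$ be a real Hilbert space, let $\alpha_1,\alpha_2\in\mathbb{R}$, let $\beta_1,\beta_2>0$, suppose $\alpha_1+\beta_1>0$ and $\alpha_2+\beta_2>0$, and suppose that either $\tfrac{\beta_1\beta_2}{(\alpha_1+\beta_1)(\alpha_2+\beta_2)}<1$ or $\max\big\{\tfrac{\beta_1}{\alpha_1+\beta_1},\tfrac{\beta_2}{\alpha_2+\beta_2}\big\}=1$. Set $\kappa=(\alpha_1+\beta_1)(\alpha_2+\beta_2)$ and $$\theta=\begin{cases}\dfrac{\beta_1\alpha_2+\beta_2\alpha_1}{\alpha_1\alpha_2+\alpha_1\beta_2+\alpha_2\beta_1},&\text{if }\tfrac{\beta_1\beta_2}{(\alpha_1+\beta_1)(\alpha_2+\beta_2)}<1;\\[2mm] 1,&\text{if }\max\big\{\tfrac{\beta_1}{\alpha_1+\beta_1},\tfrac{\beta_2}{\alpha_2+\beta_2}\big\}=1.\end{cases}$$ Suppose $R_1\colon X\to X$ admits an $(\alpha_1,\beta_1)$-I-N decomposition and $R_2\colon X\to X$ admits an $(\alpha_2,\beta_2)$-I-N decomposition. Then $\theta\in\left]0,+\infty\right[$ and there exists a nonexpansive $N\colon X\to X$ such that $R_2R_1=\kappa(1-\theta)\mathrm{Id}+\kappa\theta N$, i.e., $R_2R_1$ is $\kappa$-scaled $\theta$-conically nonexpansive.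
   Context: For $(\alpha,\beta)\in\mathbb{R}\times[0,\infty[$, an operator $R\colon X\to X$ admits an $(\alpha,\beta)$-I-N (Identity-Nonexpansive) decomposition if there exists a nonexpansive ($1$-Lipschitz) $N\colon X\to X$ with $R=\alpha\mathrm{Id}+\beta N$. *)

theory Defs
  imports "HOL-Analysis.Analysis"
begin

definition nonexpansive :: "('a::metric_space \<Rightarrow> 'a) \<Rightarrow> bool" where
  "nonexpansive N \<longleftrightarrow> (\<forall>x y. dist (N x) (N y) \<le> dist x y)"

definition IN_decomposition :: "real \<Rightarrow> real \<Rightarrow> ('a::real_normed_vector \<Rightarrow> 'a) \<Rightarrow> bool" where
  "IN_decomposition \<alpha> \<beta> R \<longleftrightarrow> (\<exists>N. nonexpansive N \<and> (\<forall>x. R x = \<alpha> *\<^sub>R x + \<beta> *\<^sub>R N x))"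

end

theory Submission imports Defs begin

text \<open>Dividing \<open>R\<^sub>i\<close> by \<open>\<alpha>\<^sub>i + \<beta>\<^sub>i\<close> (and conjugating \<open>R\<^sub>2\<close> by the scaling
  \<open>\<alpha>\<^sub>1 + \<beta>\<^sub>1\<close>) writes \<open>R\<^sub>2R\<^sub>1 = \<kappa> T\<^sub>2T\<^sub>1\<close> with \<open>T\<^sub>i\<close> conically nonexpansive of
  parameter \<open>t\<^sub>i = \<beta>\<^sub>i/(\<alpha>\<^sub>i + \<beta>\<^sub>i)\<close>. In a Hilbert space, \<open>T\<close> is \<open>t\<close>-conic iff
  \<open>\<parallel>(I-T)x - (I-T)y\<parallel>\<^sup>2 \<le> 2t\<langle>x-y, (I-T)x - (I-T)y\<rangle>\<close>. Applying this to \<open>T\<^sub>1\<close> at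
  \<open>x,y\<close> and to \<open>T\<^sub>2\<close> at \<open>T\<^sub>1x, T\<^sub>1y\<close> and adding the two inequalities with weights
  \<open>\<theta>/t\<^sub>i\<close> yields the inequality for \<open>T\<^sub>2T\<^sub>1\<close> with parameter \<open>\<theta>\<close>, up to a quadratic form
  of vanishing discriminant, which is nonnegative by Cauchy-Schwarz. If instead
  \<open>max t\<^sub>i = 1 \<le> t\<^sub>1t\<^sub>2\<close>, both \<open>T\<^sub>i\<close> are nonexpansive and so is their composition.\<close>

abbreviation conically_nonexpansive :: "real \<Rightarrow> ('a::real_normed_vector \<Rightarrow> 'a) \<Rightarrow> bool" where
  "conically_nonexpansive \<theta> \<equiv> IN_decomposition (1 - \<theta>) \<theta>"

lemma quadratic_form_nonneg:
  fixes p r s C D1 D2 :: real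
  assumes "p \<ge> 0" "r \<ge> 0" "D1 \<ge> 0" "D2 \<ge> 0" "C\<^sup>2 \<le> D1 * D2" "s\<^sup>2 = p * r"
  shows "p * D1 + 2 * s * C + r * D2 \<ge> 0"
proof -
  have "(2 * s * C)\<^sup>2 = 4 * (p * r) * C\<^sup>2"
    using assms(6) by (simp add: power_mult_distrib)
  also have "\<dots> \<le> 4 * (p * r) * (D1 * D2)"
    using assms by (simp add: mult_left_mono)
  also have "\<dots> = (p * D1 + r * D2)\<^sup>2 - (p * D1 - r * D2)\<^sup>2"
    by (simp add: power2_eq_square algebra_simps)
  also have "\<dots> \<le> (p * D1 + r * D2)\<^sup>2"
    by simp
  finally have "\<bar>2 * s * C\<bar> \<le> \<bar>p * D1 + r * D2\<bar>"
    by (simp only: abs_le_square_iff)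
  moreover have "p * D1 + r * D2 \<ge> 0"
    using assms by simp
  ultimately show ?thesis
    by linarith
qed

lemma composition_parameter_pos:
  fixes t1 t2 :: real
  assumes "t1 > 0" "t2 > 0" "t1 * t2 < 1"
  shows "(t1 + t2 - 2 * t1 * t2) / (1 - t1 * t2) > 0"
proof -
  have "(t1 + t2 - 2 * t1 * t2) / (1 - t1 * t2) = t1 + t2 * (1 - t1)\<^sup>2 / (1 - t1 * t2)"
    using assms(3) by (simp add: field_simps power2_eq_square)
  also have "\<dots> > 0"
    using assms by (simp add: add_pos_nonneg)
  finally show ?thesis .
qed

lemma composition_parameter_eq:
  fixes \<alpha>1 \<alpha>2 \<beta>1 \<beta>2 :: real
  assumes "\<alpha>1 + \<beta>1 \<noteq> 0" "\<alpha>2 + \<beta>2 \<noteq> 0"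
  defines "t1 \<equiv> \<beta>1 / (\<alpha>1 + \<beta>1)" and "t2 \<equiv> \<beta>2 / (\<alpha>2 + \<beta>2)"
  shows "(\<beta>1 * \<alpha>2 + \<beta>2 * \<alpha>1) / (\<alpha>1 * \<alpha>2 + \<alpha>1 * \<beta>2 + \<alpha>2 * \<beta>1)
    = (t1 + t2 - 2 * t1 * t2) / (1 - t1 * t2)"
proof -
  have "t1 + t2 - 2 * t1 * t2 = (\<beta>1 * \<alpha>2 + \<beta>2 * \<alpha>1) / ((\<alpha>1 + \<beta>1) * (\<alpha>2 + \<beta>2))"
    and "1 - t1 * t2 = (\<alpha>1 * \<alpha>2 + \<alpha>1 * \<beta>2 + \<alpha>2 * \<beta>1) / ((\<alpha>1 + \<beta>1) * (\<alpha>2 + \<beta>2))"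
    unfolding t1_def t2_def using assms(1,2) by (simp_all add: divide_simps) (simp_all add: algebra_simps)
  then show ?thesis
    using assms(1,2) by simp
qed

lemma max_eq_one_imp_eq_one:
  fixes t1 t2 :: real
  assumes "t1 > 0" "t2 > 0" "1 \<le> t1 * t2" "max t1 t2 = 1"
  shows "t1 = 1" "t2 = 1"
proof -
  have "t1 \<le> 1" "t2 \<le> 1"
    using assms(4) by (auto simp: max_def split: if_splits)
  moreover have "t1 * t2 \<le> t1" "t1 * t2 \<le> t2"
    using calculation assms(1,2) by (simp_all add: mult_left_le mult_left_le_one_le)
  ultimately show "t1 = 1" "t2 = 1"
    using assms(3) by linarith+
qed

text \<open>The real-number core of the composition estimate: with
  \<open>D\<^sub>1 = \<parallel>d\<^sub>1\<parallel>\<^sup>2\<close>, \<open>D\<^sub>2 = \<parallel>d\<^sub>2\<parallel>\<^sup>2\<close>, \<open>C = \<langle>d\<^sub>1,d\<^sub>2\<rangle>\<close>, \<open>P = \<langle>u,d\<^sub>1\<rangle>\<close>, \<open>Q = \<langle>u,d\<^sub>2\<rangle>\<close>,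
  the defect \<open>2\<theta>(P+Q) - \<parallel>d\<^sub>1+d\<^sub>2\<parallel>\<^sup>2\<close> splits into the two hypotheses scaled by \<open>\<theta>/t\<^sub>i\<close>
  plus a quadratic form in \<open>(d\<^sub>1,d\<^sub>2)\<close> whose discriminant vanishes.\<close>
lemma composition_inequality:
  fixes t1 t2 P Q C D1 D2 :: real
  assumes t1: "t1 > 0" and t2: "t2 > 0" and t12: "t1 * t2 < 1"
    and "D1 \<ge> 0" "D2 \<ge> 0" "C\<^sup>2 \<le> D1 * D2"
    and h1: "D1 \<le> 2 * t1 * P" and h2: "D2 \<le> 2 * t2 * (Q - C)"
  shows "D1 + 2 * C + D2 \<le> 2 * ((t1 + t2 - 2 * t1 * t2) / (1 - t1 * t2)) * (P + Q)"
proof -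
  define \<theta> where "\<theta> = (t1 + t2 - 2 * t1 * t2) / (1 - t1 * t2)"
  define p where "p = t2 * (1 - t1)\<^sup>2 / (t1 * (1 - t1 * t2))"
  define r where "r = t1 * (1 - t2)\<^sup>2 / (t2 * (1 - t1 * t2))"
  have den: "1 - t1 * t2 > 0"
    using t12 by simp
  have \<theta>_pos: "\<theta> > 0"
    unfolding \<theta>_def using composition_parameter_pos[OF t1 t2 t12] .
  have p: "\<theta> / t1 = 1 + p" and r: "\<theta> / t2 = 1 + r"
    unfolding \<theta>_def p_def r_def using t1 t2 den
    by (simp_all add: field_simps power2_eq_square; simp add: algebra_simps)+
  then have p': "p = \<theta> / t1 - 1" and r': "r = \<theta> / t2 - 1"
    by simp_all
  have "\<theta> - 1 = - ((1 - t1) * (1 - t2) / (1 - t1 * t2))"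
    unfolding \<theta>_def using den by (simp add: field_simps; simp add: algebra_simps)
  then have "(\<theta> - 1)\<^sup>2 = p * r"
    unfolding p_def r_def using t1 t2 den by (simp add: power2_eq_square)
  then have form: "p * D1 + 2 * (\<theta> - 1) * C + r * D2 \<ge> 0"
    using quadratic_form_nonneg[of p r D1 D2 C "\<theta> - 1"] assms(4-6) t1 t2 den
    unfolding p_def r_def by simp
  have "2 * \<theta> * (P + Q) - (D1 + 2 * C + D2)
      = (\<theta> / t1) * (2 * t1 * P - D1) + (\<theta> / t2) * (2 * t2 * (Q - C) - D2)
        + (p * D1 + 2 * (\<theta> - 1) * C + r * D2)"
    using t1 t2 unfolding p' r' by (simp add: field_simps)
  moreover have "(\<theta> / t1) * (2 * t1 * P - D1) \<ge> 0" "(\<theta> / t2) * (2 * t2 * (Q - C) - D2) \<ge> 0"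
    using \<theta>_pos t1 t2 h1 h2 by simp_all
  ultimately show ?thesis
    using form unfolding \<theta>_def[symmetric] by linarith
qed

lemma norm_diff_scaleR_le_iff:
  fixes u z :: "'a::real_inner"
  assumes "t > 0"
  shows "norm (u - (1 / t) *\<^sub>R z) \<le> norm u \<longleftrightarrow> (norm z)\<^sup>2 \<le> 2 * t * inner u z"
proof -
  have "norm (u - (1 / t) *\<^sub>R z) \<le> norm u \<longleftrightarrow> (norm (u - (1 / t) *\<^sub>R z))\<^sup>2 \<le> (norm u)\<^sup>2"
    using abs_le_square_iff[of "norm (u - (1 / t) *\<^sub>R z)" "norm u"] by simp
  also have "(norm (u - (1 / t) *\<^sub>R z))\<^sup>2 = (norm u)\<^sup>2 - 2 * (1 / t) * inner u z + (1 / t)\<^sup>2 * (norm z)\<^sup>2"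
    unfolding power2_norm_eq_inner by (simp add: inner_diff inner_commute power2_eq_square algebra_simps)
  also have "\<dots> \<le> (norm u)\<^sup>2 \<longleftrightarrow> (1 / t) * ((norm z)\<^sup>2 / t) \<le> (1 / t) * (2 * inner u z)"
    by (simp add: power2_eq_square algebra_simps)
  also have "\<dots> \<longleftrightarrow> (norm z)\<^sup>2 / t \<le> 2 * inner u z"
    using assms by (intro mult_le_cancel_left_pos) simp
  also have "\<dots> \<longleftrightarrow> (norm z)\<^sup>2 \<le> 2 * t * inner u z"
    using assms by (simp add: divide_le_eq algebra_simps)
  finally show ?thesis .
qed

lemma conically_nonexpansive_iff:
  fixes T :: "'a::real_inner \<Rightarrow> 'a"
  assumes "\<theta> > 0"
  shows "conically_nonexpansive \<theta> T \<longleftrightarrow>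
    (\<forall>x y. (norm ((x - T x) - (y - T y)))\<^sup>2 \<le> 2 * \<theta> * inner (x - y) ((x - T x) - (y - T y)))"
proof -
  have "conically_nonexpansive \<theta> T \<longleftrightarrow> nonexpansive (\<lambda>x. x - (1 / \<theta>) *\<^sub>R (x - T x))"
  proof
    assume "conically_nonexpansive \<theta> T"
    then obtain N where "nonexpansive N" and T: "\<And>x. T x = (1 - \<theta>) *\<^sub>R x + \<theta> *\<^sub>R N x"
      unfolding IN_decomposition_def by blast
    moreover have "x - (1 / \<theta>) *\<^sub>R (x - T x) = N x" for x
      using assms by (simp add: T algebra_simps)
    ultimately show "nonexpansive (\<lambda>x. x - (1 / \<theta>) *\<^sub>R (x - T x))"
      by simp
  next
    assume "nonexpansive (\<lambda>x. x - (1 / \<theta>) *\<^sub>R (x - T x))"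
    moreover have "T x = (1 - \<theta>) *\<^sub>R x + \<theta> *\<^sub>R (x - (1 / \<theta>) *\<^sub>R (x - T x))" for x
      using assms by (simp add: algebra_simps)
    ultimately show "conically_nonexpansive \<theta> T"
      unfolding IN_decomposition_def by blast
  qed
  also have "\<dots> \<longleftrightarrow>
    (\<forall>x y. (norm ((x - T x) - (y - T y)))\<^sup>2 \<le> 2 * \<theta> * inner (x - y) ((x - T x) - (y - T y)))"
  proof -
    have "(x - (1 / \<theta>) *\<^sub>R (x - T x)) - (y - (1 / \<theta>) *\<^sub>R (y - T y))
        = (x - y) - (1 / \<theta>) *\<^sub>R ((x - T x) - (y - T y))" for x y
      by (simp add: algebra_simps)
    then show ?thesis
      unfolding nonexpansive_def dist_norm by (simp only: norm_diff_scaleR_le_iff[OF assms])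
  qed
  finally show ?thesis .
qed

lemma conically_nonexpansive_one_iff: "conically_nonexpansive 1 T \<longleftrightarrow> nonexpansive T"
  unfolding IN_decomposition_def by (simp flip: fun_eq_iff)

lemma nonexpansive_comp: "nonexpansive f \<Longrightarrow> nonexpansive g \<Longrightarrow> nonexpansive (g \<circ> f)"
  unfolding nonexpansive_def by (metis comp_apply order_trans)

lemma IN_decomposition_normalize:
  assumes "\<alpha> + \<beta> > 0" "IN_decomposition \<alpha> \<beta> R"
  shows "conically_nonexpansive (\<beta> / (\<alpha> + \<beta>)) (\<lambda>x. (1 / (\<alpha> + \<beta>)) *\<^sub>R R x)"
proof -
  obtain N where "nonexpansive N" and R: "\<And>x. R x = \<alpha> *\<^sub>R x + \<beta> *\<^sub>R N x"
    using assms(2) unfolding IN_decomposition_def by blast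
  moreover have "(1 / (\<alpha> + \<beta>)) *\<^sub>R R x
      = (1 - \<beta> / (\<alpha> + \<beta>)) *\<^sub>R x + (\<beta> / (\<alpha> + \<beta>)) *\<^sub>R N x" for x
  proof -
    have "1 - \<beta> / (\<alpha> + \<beta>) = \<alpha> / (\<alpha> + \<beta>)"
      using assms(1) by (simp add: field_simps)
    then show ?thesis
      by (simp add: R scaleR_add_right)
  qed
  ultimately show ?thesis
    unfolding IN_decomposition_def by blast
qed

lemma IN_decomposition_conj_scaleR:
  assumes "c \<noteq> 0" "IN_decomposition \<alpha> \<beta> R"
  shows "IN_decomposition \<alpha> \<beta> (\<lambda>x. (1 / c) *\<^sub>R R (c *\<^sub>R x))"
proof -
  obtain N where N: "nonexpansive N" and R: "\<And>x. R x = \<alpha> *\<^sub>R x + \<beta> *\<^sub>R N x"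
    using assms(2) unfolding IN_decomposition_def by blast
  have "nonexpansive (\<lambda>x. (1 / c) *\<^sub>R N (c *\<^sub>R x))"
    unfolding nonexpansive_def dist_norm
  proof (intro allI)
    fix x y
    have "norm ((1 / c) *\<^sub>R N (c *\<^sub>R x) - (1 / c) *\<^sub>R N (c *\<^sub>R y))
        = norm (N (c *\<^sub>R x) - N (c *\<^sub>R y)) / \<bar>c\<bar>"
      by (simp flip: scaleR_diff_right)
    also have "\<dots> \<le> norm (c *\<^sub>R x - c *\<^sub>R y) / \<bar>c\<bar>"
      using N unfolding nonexpansive_def dist_norm by (simp add: divide_right_mono)
    also have "\<dots> = norm (x - y)"
      using assms(1) by (simp flip: scaleR_diff_right)
    finally show "norm ((1 / c) *\<^sub>R N (c *\<^sub>R x) - (1 / c) *\<^sub>R N (c *\<^sub>R y)) \<le> norm (x - y)" .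
  qed
  moreover have "(1 / c) *\<^sub>R R (c *\<^sub>R x) = \<alpha> *\<^sub>R x + \<beta> *\<^sub>R ((1 / c) *\<^sub>R N (c *\<^sub>R x))" for x
    using assms(1) by (simp add: R scaleR_add_right)
  ultimately show ?thesis
    unfolding IN_decomposition_def by blast
qed

lemma conically_nonexpansive_comp:
  fixes T1 T2 :: "'a::real_inner \<Rightarrow> 'a"
  assumes t1: "t1 > 0" and t2: "t2 > 0" and t12: "t1 * t2 < 1"
    and T1: "conically_nonexpansive t1 T1" and T2: "conically_nonexpansive t2 T2"
  shows "conically_nonexpansive ((t1 + t2 - 2 * t1 * t2) / (1 - t1 * t2)) (T2 \<circ> T1)"
  unfolding conically_nonexpansive_iff[OF composition_parameter_pos[OF t1 t2 t12]]
proof (intro allI)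
  fix x y :: 'a
  define u where "u = x - y"
  define d1 where "d1 = (x - T1 x) - (y - T1 y)"
  define d2 where "d2 = (T1 x - T2 (T1 x)) - (T1 y - T2 (T1 y))"
  have "(norm d1)\<^sup>2 \<le> 2 * t1 * inner u d1"
    using T1 unfolding conically_nonexpansive_iff[OF t1] u_def d1_def by blast
  moreover have "T1 x - T1 y = u - d1"
    unfolding u_def d1_def by (simp add: algebra_simps)
  then have "(norm d2)\<^sup>2 \<le> 2 * t2 * (inner u d2 - inner d1 d2)"
    using T2 unfolding conically_nonexpansive_iff[OF t2] d2_def
    by (metis inner_diff_left)
  moreover have "(inner d1 d2)\<^sup>2 \<le> (norm d1)\<^sup>2 * (norm d2)\<^sup>2"
    using Cauchy_Schwarz_ineq[of d1 d2] by (simp add: power2_norm_eq_inner)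
  ultimately have "(norm d1)\<^sup>2 + 2 * inner d1 d2 + (norm d2)\<^sup>2
      \<le> 2 * ((t1 + t2 - 2 * t1 * t2) / (1 - t1 * t2)) * (inner u d1 + inner u d2)"
    using composition_inequality[OF t1 t2 t12] by simp
  moreover have "(x - (T2 \<circ> T1) x) - (y - (T2 \<circ> T1) y) = d1 + d2"
    unfolding d1_def d2_def by (simp add: algebra_simps)
  ultimately show "(norm ((x - (T2 \<circ> T1) x) - (y - (T2 \<circ> T1) y)))\<^sup>2
      \<le> 2 * ((t1 + t2 - 2 * t1 * t2) / (1 - t1 * t2)) * inner (x - y) ((x - (T2 \<circ> T1) x) - (y - (T2 \<circ> T1) y))"
    unfolding u_def by (simp add: power2_norm_eq_inner inner_add inner_commute algebra_simps)
qed

lemma conically_nonexpansive_comp_if: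
  fixes T1 T2 :: "'a::real_inner \<Rightarrow> 'a"
  assumes t1: "t1 > 0" and t2: "t2 > 0" and "t1 * t2 < 1 \<or> max t1 t2 = 1"
    and T1: "conically_nonexpansive t1 T1" and T2: "conically_nonexpansive t2 T2"
  defines "\<theta> \<equiv> if t1 * t2 < 1 then (t1 + t2 - 2 * t1 * t2) / (1 - t1 * t2) else 1"
  shows "\<theta> > 0 \<and> conically_nonexpansive \<theta> (T2 \<circ> T1)"
proof (cases "t1 * t2 < 1")
  case True
  then show ?thesis
    using composition_parameter_pos[OF t1 t2 True] conically_nonexpansive_comp[OF t1 t2 True T1 T2]
    unfolding \<theta>_def by simp
next
  case False
  then have "t1 = 1" "t2 = 1" "\<theta> = 1"
    using max_eq_one_imp_eq_one[OF t1 t2] assms(3) unfolding \<theta>_def by auto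
  moreover have "nonexpansive (T2 \<circ> T1)"
    using T1 T2 calculation nonexpansive_comp conically_nonexpansive_one_iff by metis
  ultimately show ?thesis
    using conically_nonexpansive_one_iff zero_less_one by metis
qed

theorem mainTheorem7:
  fixes R1 R2 :: "'a::{real_inner, complete_space} \<Rightarrow> 'a"
    and \<alpha>1 \<alpha>2 \<beta>1 \<beta>2 \<kappa> \<theta> :: real
  assumes "\<beta>1 > 0" and "\<beta>2 > 0"
    and "\<alpha>1 + \<beta>1 > 0" and "\<alpha>2 + \<beta>2 > 0"
    and "\<beta>1 * \<beta>2 / ((\<alpha>1 + \<beta>1) * (\<alpha>2 + \<beta>2)) < 1
         \<or> max (\<beta>1 / (\<alpha>1 + \<beta>1)) (\<beta>2 / (\<alpha>2 + \<beta>2)) = 1"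
    and "\<kappa> = (\<alpha>1 + \<beta>1) * (\<alpha>2 + \<beta>2)"
    and "\<theta> = (if \<beta>1 * \<beta>2 / ((\<alpha>1 + \<beta>1) * (\<alpha>2 + \<beta>2)) < 1
               then (\<beta>1 * \<alpha>2 + \<beta>2 * \<alpha>1) / (\<alpha>1 * \<alpha>2 + \<alpha>1 * \<beta>2 + \<alpha>2 * \<beta>1)
               else 1)"
    and "IN_decomposition \<alpha>1 \<beta>1 R1"
    and "IN_decomposition \<alpha>2 \<beta>2 R2"
  shows "\<theta> > 0 \<and> (\<exists>N. nonexpansive N \<and>
           (\<forall>x. R2 (R1 x) = (\<kappa> * (1 - \<theta>)) *\<^sub>R x + (\<kappa> * \<theta>) *\<^sub>R N x))"
proof -
  define t1 t2 where "t1 = \<beta>1 / (\<alpha>1 + \<beta>1)" and "t2 = \<beta>2 / (\<alpha>2 + \<beta>2)"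
  define T1 where "T1 x = (1 / (\<alpha>1 + \<beta>1)) *\<^sub>R R1 x" for x
  \<comment> \<open>\<open>R\<^sub>2\<close> is not homogeneous, so its normalisation also absorbs the factor \<open>\<alpha>\<^sub>1 + \<beta>\<^sub>1\<close> taken out of \<open>R\<^sub>1\<close>.\<close>
  define T2 where "T2 x = (1 / (\<alpha>2 + \<beta>2)) *\<^sub>R ((1 / (\<alpha>1 + \<beta>1)) *\<^sub>R R2 ((\<alpha>1 + \<beta>1) *\<^sub>R x))" for x
  have t1: "t1 > 0" and t2: "t2 > 0"
    using assms(1-4) unfolding t1_def t2_def by simp_all
  have T1: "conically_nonexpansive t1 T1"
    using IN_decomposition_normalize[OF assms(3,8)] unfolding t1_def T1_def[abs_def] .
  have T2: "conically_nonexpansive t2 T2"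
    using IN_decomposition_normalize[OF assms(4) IN_decomposition_conj_scaleR[OF _ assms(9)]] assms(3)
    unfolding t2_def T2_def[abs_def] by simp
  have ratio: "\<beta>1 * \<beta>2 / ((\<alpha>1 + \<beta>1) * (\<alpha>2 + \<beta>2)) = t1 * t2"
    unfolding t1_def t2_def by simp
  have "t1 * t2 < 1 \<or> max t1 t2 = 1"
    using assms(5) unfolding ratio t1_def[symmetric] t2_def[symmetric] .
  moreover have "\<theta> = (if t1 * t2 < 1 then (t1 + t2 - 2 * t1 * t2) / (1 - t1 * t2) else 1)"
    using assms(7) composition_parameter_eq[of \<alpha>1 \<beta>1 \<alpha>2 \<beta>2] assms(3,4)
    unfolding ratio t1_def[symmetric] t2_def[symmetric] by simp
  ultimately have conic: "\<theta> > 0 \<and> conically_nonexpansive \<theta> (T2 \<circ> T1)"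
    using conically_nonexpansive_comp_if[OF t1 t2 _ T1 T2] by simp
  then obtain N where "nonexpansive N" and N: "\<And>x. T2 (T1 x) = (1 - \<theta>) *\<^sub>R x + \<theta> *\<^sub>R N x"
    unfolding IN_decomposition_def by auto
  have "R2 (R1 x) = \<kappa> *\<^sub>R T2 (T1 x)" for x
    using assms(3,4,6) unfolding T1_def T2_def by simp
  then have "R2 (R1 x) = (\<kappa> * (1 - \<theta>)) *\<^sub>R x + (\<kappa> * \<theta>) *\<^sub>R N x" for x
    by (simp add: N scaleR_add_right)
  then show ?thesis
    using conic \<open>nonexpansive N\<close> by blast
qed

end
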